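(* Let $p>q\geq 2$ be relatively prime integers with $p\geq 2q-1$. For every $d\in A_q$ let $k_d\in A_p$ and $j_d\in A_q$ be the unique elements with $k_dq\equiv d\pmod p$ and $k_dq=j_dp+d$. If $wab\in L(q,p)$ for some word $w$ over $A_{pq}$ and digits $a,b\in A_{pq}$ with $a\equiv k_d\pmod p$, then $b\equiv j_d\pmod q$.
   Context: For an integer $n>1$, $A_n=\{0,1,\dots,n-1\}$. For relatively prime integers $r,s\geq2$ define $g_{r,s}:A_{rs}\times A_{rs}\to A_{rs}$ by writing $x=x_1s+x_0$, $y=y_1s+y_0$ with $x_0,y_0\in A_s$, $x_1,y_1\in A_r$ (uniquely), and $g_{r,s}(x,y)=x_0r+y_1$; and $F_{r,s}:A_{rs}^{\mathbb{Z}}\to A_{rs}^{\mathbb{Z}}$ by $F_{r,s}(c)(i)=g_{r,s}(g_{r,s}(c(i-1),c(i)),g_{r,s}(c(i),c(i+1)))$. $F_{r,s}$ is a bijection with inverse $F_{s,r}$, so $F_{r,s}^n$ is defined for $n\in\mathbb{Z}$. The trace is $\mathrm{tr}_{r,s}(c)=(F_{r,s}^n(c)(1))_{n\in\mathbb{Z}}$, and $L(r,s)$ is the set of all finite words $u(1)\cdots u(m)$ ($m\geq0$) over $A_{rs}$ such that for some $c\in A_{rs}^{\mathbb{Z}}$ and $n_0\in\mathbb{Z}$ we have $u(j)=\mathrm{tr}_{r,s}(c)(n_0+j)$ for $1\leq j\leq m$. Here $L(q,p)$ refers to traces with respect to $F_{q,p}$. *)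

theory Defs
  imports Main
begin

text \<open>Alphabet A_n = {0,...,n-1} is represented by natural numbers below n.
  Configurations are functions int => nat with all values below r*s.\<close>

definition g :: "nat \<Rightarrow> nat \<Rightarrow> nat \<Rightarrow> nat \<Rightarrow> nat" where
  "g r s x y = (x mod s) * r + y div s"

definition configs :: "nat \<Rightarrow> nat \<Rightarrow> (int \<Rightarrow> nat) set" where
  "configs r s = {c. \<forall>i. c i < r * s}"

definition F :: "nat \<Rightarrow> nat \<Rightarrow> (int \<Rightarrow> nat) \<Rightarrow> (int \<Rightarrow> nat)" where
  "F r s c = (\<lambda>i. g r s (g r s (c (i - 1)) (c i)) (g r s (c i) (c (i + 1))))"

definition Fpow :: "nat \<Rightarrow> nat \<Rightarrow> int \<Rightarrow> (int \<Rightarrow> nat) \<Rightarrow> (int \<Rightarrow> nat)" where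
  "Fpow r s n = (if 0 \<le> n then (F r s) ^^ (nat n)
                 else (inv_into (configs r s) (F r s)) ^^ (nat (- n)))"

definition tr :: "nat \<Rightarrow> nat \<Rightarrow> (int \<Rightarrow> nat) \<Rightarrow> int \<Rightarrow> nat" where
  "tr r s c = (\<lambda>n. Fpow r s n c 1)"

definition L :: "nat \<Rightarrow> nat \<Rightarrow> nat list set" where
  "L r s = {u. \<exists>c \<in> configs r s. \<exists>n0::int.
              \<forall>j \<in> {1..length u}. u ! (j - 1) = tr r s c (n0 + int j)}"

end

theory Submission
  imports Defs
begin

text \<open>If cell 1 holds a letter \<open>a \<equiv> k\<close> (mod \<open>p\<close>), then
  \<open>g q p a c\<^sub>2 = k q + t = j p + (d + t)\<close> with \<open>t = c\<^sub>2 div p < q\<close>, and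
  \<open>d + t < p\<close> because \<open>p \<ge> 2q - 1\<close>; so this value has quotient \<open>j\<close> by \<open>p\<close>, and that
  quotient is the residue mod \<open>q\<close> of the next letter of the trace. The trace may use negative times, so we also need that \<open>F\<close> is onto the
  configurations; this holds because \<open>F r s\<close> is two half steps of \<open>g r s\<close> followed by a
  shift, and a half step of \<open>g s r\<close> after one of \<open>g r s\<close> is the shift.\<close>

definition half_step :: "nat \<Rightarrow> nat \<Rightarrow> (int \<Rightarrow> nat) \<Rightarrow> (int \<Rightarrow> nat)" where
  "half_step r s c = (\<lambda>i. g r s (c i) (c (i + 1)))"

lemma g_less:
  assumes "y < r * s"
  shows "g r s x y < r * s"
proof -
  have "0 < s" "0 < r" using assms by (auto intro: gr0I)
  then have "y div s < r" using assms by (simp add: div_less_iff_less_mult mult.commute)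
  then have "(x mod s) * r + y div s < (x mod s + 1) * r" by simp
  also have "\<dots> \<le> s * r" using \<open>0 < s\<close> by (intro mult_right_mono) (auto simp: Suc_le_eq)
  finally show ?thesis by (simp add: g_def mult.commute)
qed

lemma g_swap_g:
  assumes "y < r * s" and "z < r * s"
  shows "g s r (g r s x y) (g r s y z) = y"
proof -
  have "0 < s" "0 < r" using assms by (auto intro: gr0I)
  then have "y div s < r" "z div s < r"
    using assms by (simp_all add: div_less_iff_less_mult mult.commute)
  then have "((x mod s) * r + y div s) mod r = y div s"
    and "((y mod s) * r + z div s) div r = y mod s" using \<open>0 < r\<close> by simp_all
  then show ?thesis by (simp add: g_def)
qed

lemma configs_commute: "configs r s = configs s r"
  by (simp add: configs_def mult.commute)

lemma half_step_in_configs: "c \<in> configs r s \<Longrightarrow> half_step r s c \<in> configs r s"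
  by (simp add: configs_def half_step_def g_less)

lemma half_step_swap_half_step:
  "c \<in> configs r s \<Longrightarrow> half_step s r (half_step r s c) = (\<lambda>i. c (i + 1))"
  by (simp add: configs_def half_step_def g_swap_g)

lemma half_step_shift: "half_step r s (\<lambda>i. c (i + 1)) = (\<lambda>i. half_step r s c (i + 1))"
  by (simp add: half_step_def)

lemma F_eq_half_step: "F r s c = (\<lambda>i. half_step r s (half_step r s c) (i - 1))"
  by (simp add: F_def half_step_def add.commute)

lemma F_in_configs: "c \<in> configs r s \<Longrightarrow> F r s c \<in> configs r s"
  using half_step_in_configs[OF half_step_in_configs] by (auto simp: F_eq_half_step configs_def)

lemma configs_subset_image_F: "configs r s \<subseteq> F r s ` configs r s"
proof
  fix y assume "y \<in> configs r s"
  define e where "e = (\<lambda>i. y (i - 1))"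
  have e: "e \<in> configs s r" and e_shift: "(\<lambda>i. e (i + 1)) \<in> configs s r"
    using \<open>y \<in> configs r s\<close> by (auto simp: e_def configs_def mult.commute)
  define x where "x = half_step s r (half_step s r e)"
  have x: "x \<in> configs r s"
    unfolding x_def using half_step_in_configs[OF half_step_in_configs[OF e]] configs_commute
    by metis
  have "half_step r s x = half_step s r (\<lambda>i. e (i + 1))"
    using half_step_swap_half_step[OF half_step_in_configs[OF e]]
    by (simp add: x_def half_step_shift)
  then have "half_step r s (half_step r s x) = (\<lambda>i. e (i + 2))"
    using half_step_swap_half_step[OF e_shift] by (simp add: add.assoc)
  then have "F r s x = y" by (simp add: F_eq_half_step e_def)
  with x show "y \<in> F r s ` configs r s" by blast
qed

lemma Fpow_in_configs_and_succ:
  assumes "c \<in> configs r s"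
  shows "Fpow r s n c \<in> configs r s \<and> F r s (Fpow r s n c) = Fpow r s (n + 1) c"
proof (cases "0 \<le> n")
  case True
  have "(F r s ^^ m) c \<in> configs r s" for m
    by (induction m) (simp_all add: assms F_in_configs)
  moreover have "nat (n + 1) = Suc (nat n)" using True by simp
  ultimately show ?thesis using True by (simp add: Fpow_def)
next
  case False
  let ?G = "inv_into (configs r s) (F r s)"
  have G_in: "(?G ^^ m) c \<in> configs r s" for m
    by (induction m) (auto simp: assms inv_into_into[OF subsetD[OF configs_subset_image_F]])
  obtain m where m: "nat (- n) = Suc m" using False by (cases "nat (- n)") auto
  have "F r s ((?G ^^ nat (- n)) c) = (?G ^^ m) c"
    using m G_in[of m] configs_subset_image_F by (simp add: f_inv_into_f subset_iff)
  moreover have "Fpow r s (n + 1) c = (?G ^^ m) c"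
  proof (cases "n + 1 = 0")
    case True
    then have "m = 0" using m by simp
    with True show ?thesis by (simp add: Fpow_def)
  next
    case False
    then show ?thesis using m \<open>\<not> 0 \<le> n\<close> by (simp add: Fpow_def nat_diff_distrib)
  qed
  ultimately show ?thesis using False G_in by (simp add: Fpow_def)
qed

lemma tr_succ:
  "c \<in> configs r s \<Longrightarrow> tr r s c (n + 1) = F r s (Fpow r s n c) 1"
  using Fpow_in_configs_and_succ by (simp add: tr_def)

lemma L_last_two_letters:
  assumes "w @ [a, b] \<in> L r s"
  obtains c n where "c \<in> configs r s" "a = tr r s c n" "b = tr r s c (n + 1)"
proof -
  obtain c n0 where c: "c \<in> configs r s"
    and h: "\<forall>i \<in> {1..length w + 2}. (w @ [a, b]) ! (i - 1) = tr r s c (n0 + int i)"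
    using assms unfolding L_def by auto
  have "a = tr r s c (n0 + int (length w + 1))" using h[rule_format, of "length w + 1"] by simp
  moreover have "b = tr r s c (n0 + int (length w + 1) + 1)"
    using h[rule_format, of "length w + 2"] by (simp add: nth_append add.assoc)
  ultimately show ?thesis using that c by blast
qed

lemma F_mod: "F r s c i mod r = g r s (c i) (c (i + 1)) div s mod r"
  by (simp add: F_def g_def)

lemma g_div_eq:
  assumes "x mod s = k" and "k * r = j * s + d" and "d + y div s < s"
  shows "g r s x y div s = j"
proof -
  have "g r s x y = j * s + (d + y div s)" using assms(1,2) by (simp add: g_def)
  then show ?thesis using assms(3) by simp
qed

lemma F_digit:
  assumes "2 * q - 1 \<le> p" and "d < q" and "j < q" and "k * q = j * p + d"
    and "c \<in> configs q p" and "c 1 mod p = k"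
  shows "F q p c 1 mod q = j"
proof -
  have "c 2 < q * p" "0 < p" using assms(1,2,5) by (simp_all add: configs_def)
  then have "c 2 div p < q" by (simp add: div_less_iff_less_mult)
  then have "d + c 2 div p < p" using assms(1,2) by arith
  then have "g q p (c 1) (c 2) div p = j" using assms(4,6) by (intro g_div_eq)
  then show ?thesis using F_mod[of q p c 1] assms(3) by simp
qed

theorem lemma5:
  fixes p q d k j a b :: nat and w :: "nat list"
  assumes "p > q" and "q \<ge> 2" and "coprime p q" and "p \<ge> 2 * q - 1"
    and "d < q"
    and "k < p" and "j < q" and "(k * q) mod p = d mod p" and "k * q = j * p + d"
    and "\<forall>x \<in> set w. x < p * q" and "a < p * q" and "b < p * q"
    and "a mod p = k mod p"
    and "w @ [a, b] \<in> L q p"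
  shows "b mod q = j mod q"
proof -
  obtain c n where c: "c \<in> configs q p" and a: "a = tr q p c n" and b: "b = tr q p c (n + 1)"
    using L_last_two_letters[OF assms(14)] .
  let ?c' = "Fpow q p n c"
  have "?c' \<in> configs q p" using Fpow_in_configs_and_succ[OF c] by blast
  moreover have "?c' 1 mod p = k" using a assms(6,13) by (simp add: tr_def)
  ultimately have "F q p ?c' 1 mod q = j" using assms(4,5,7,9) by (intro F_digit)
  then show ?thesis using b tr_succ[OF c] assms(7) by simp
qed

end
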